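(* For every object $\bar d=\{1,\dots,d\}$ of the augmented simplex category, the following assignment on generators defines an opposite $\mathcal{S}$-bialgebra structure, i.e. a prop morphism $\mathcal{S}\to\mathrm{End}^{\mathrm{op}}(\mathrm{C}^a_\bullet(\Delta^d_+))$, natural with respect to augmented simplicial maps: (i) $\varepsilon\mapsto$ the map in $\mathrm{Hom}(k,\mathrm{C}^a_\bullet(\Delta^d_+))_0$ given by $1\mapsto[\emptyset]$; (ii) $\Delta\mapsto$ the join map in $\mathrm{Hom}(\mathrm{C}^a_\bullet(\Delta^d_+)^{\otimes2},\mathrm{C}^a_\bullet(\Delta^d_+))_0$, $[v_0,\dots,v_p]\otimes[v_{p+1},\dots,v_q]\mapsto\mathrm{sign}(\pi)\,[v_{\pi(0)},\dots,v_{\pi(q)}]$ if the vertices are pairwise distinct and $\mapsto0$ otherwise, where $\pi$ is the permutation ordering the vertices increasingly; (iii) $\mu\mapsto$ the map in $\mathrm{Hom}(\mathrm{C}^a_\bullet(\Delta^d_+),\mathrm{C}^a_\bullet(\Delta^d_+)^{\otimes2})_1$, $[v_0,\dots,v_q]\mapsto\sum_{i=0}^q(-1)^i[v_0,\dots,v_i]\otimes[v_i,\dots,v_q]$ (and $[\emptyset]\mapsto0$).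
   Context: Fix a commutative ring $k$; chain complexes over $k$ with the Koszul sign rule. A prop $\mathcal{P}$ is a strict symmetric monoidal category enriched in chain complexes generated by one object, $\mathcal{P}(n,m)$ the complex of morphisms from $n$ to $m$ copies; $\circ$ vertical, $\otimes$ horizontal composition, $\mathrm{id}\in\mathcal{P}(1,1)$. For a chain complex $C$, $\mathrm{End}^{\mathrm{op}}(C)$ is the prop with $\mathrm{End}^{\mathrm{op}}(C)(n,m)=\mathrm{Hom}(C^{\otimes m},C^{\otimes n})$ (Hom complex with $(\partial f)=\partial\circ f-(-1)^{|f|}f\circ\partial$); a prop morphism $\mathcal{P}\to\mathrm{End}^{\mathrm{op}}(C)$ is an opposite $\mathcal{P}$-bialgebra. The prop $\mathcal{S}$: free prop on the free $\Sigma$-bimodule generated by $\varepsilon\in\mathcal{S}(1,0)_0$, $\Delta\in\mathcal{S}(1,2)_0$, $\mu\in\mathcal{S}(2,1)_1$, with derivation differential $\partial\varepsilon=0$, $\partial\Delta=0$, $\partial\mu=(\varepsilon\otimes\mathrm{id})-(\mathrm{id}\otimes\varepsilon)$, modulo the dg prop ideal generated by $\varepsilon\circ\mu$, $(\varepsilon\otimes\mathrm{id})\circ\Delta-\mathrm{id}$, $(\mathrm{id}\otimes\varepsilon)\circ\Delta-\mathrm{id}$. The augmented simplex category $\Delta_+$ has objects $\bar0=\emptyset,\bar1=\{1\},\bar2=\{1,2\},\dots$ and order-preserving maps. $\mathrm{C}^a_\bullet(\Delta^d_+)$ is the normalized augmented chain complex of the standard augmented simplex on $\bar d$: basis the symbols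 $[v_0,\dots,v_q]$ for strictly increasing sequences of elements of $\bar d$, including the empty simplex $[\emptyset]$, graded by cardinality (so $[\emptyset]$ has degree $0$ and $[v_0,\dots,v_q]$ degree $q+1$), symbols with repeated vertices being $0$, with differential $\partial[v_0,\dots,v_q]=\sum_i(-1)^i[v_0,\dots,\widehat{v_i},\dots,v_q]$, in particular $\partial[v]=[\emptyset]$. Naturality means compatibility with the chain maps induced by order-preserving maps $\bar d\to\bar e$. *)

theory Defs
  imports Main
begin

text \<open>Concrete model of the normalized augmented chain complex of the standard augmented
simplex on the ordered set {1..d}. A simplex [v_0,...,v_q] (strictly increasing) is encoded by
its vertex set; the empty set is the empty simplex [emptyset] (degree 0); the degree of a
simplex is the cardinality of its vertex set. The tensor square is the free module on pairs of
simplices, i.e. coefficient functions on pairs. The ground ring k, viewed as the complex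
concentrated in degree 0 (zero differential), is encoded as functions unit => k.\<close>

type_synonym 'k chain = "nat set \<Rightarrow> 'k"
type_synonym 'k chain2 = "nat set \<times> nat set \<Rightarrow> 'k"

definition verts :: "nat \<Rightarrow> nat set" where
  "verts d = {1..d}"

definition simplices :: "nat \<Rightarrow> nat set set" where
  "simplices d = Pow (verts d)"

definition simplices2 :: "nat \<Rightarrow> (nat set \<times> nat set) set" where
  "simplices2 d = simplices d \<times> simplices d"

definition chains :: "nat \<Rightarrow> ('k::zero) chain set" where
  "chains d = {x. \<forall>S. x S \<noteq> 0 \<longrightarrow> S \<in> simplices d}"

definition chains2 :: "nat \<Rightarrow> ('k::zero) chain2 set" where
  "chains2 d = {y. \<forall>p. y p \<noteq> 0 \<longrightarrow> p \<in> simplices2 d}"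

definition lin_ext :: "'a set \<Rightarrow> ('a \<Rightarrow> 'b \<Rightarrow> 'k::comm_ring_1) \<Rightarrow> ('a \<Rightarrow> 'k) \<Rightarrow> ('b \<Rightarrow> 'k)" where
  "lin_ext I F x = (\<lambda>t. \<Sum>s\<in>I. x s * F s t)"

text \<open>(-1)^i where v = v_i is the i-th vertex (0-based) of the simplex S.\<close>
definition face_sign :: "nat set \<Rightarrow> nat \<Rightarrow> 'k::comm_ring_1" where
  "face_sign S v = (-1) ^ card {u\<in>S. u < v}"

definition bd_basis :: "nat set \<Rightarrow> ('k::comm_ring_1) chain" where
  "bd_basis S = (\<lambda>T. \<Sum>v\<in>S. if T = S - {v} then face_sign S v else 0)"

definition bd :: "nat \<Rightarrow> ('k::comm_ring_1) chain \<Rightarrow> 'k chain" where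
  "bd d = lin_ext (simplices d) bd_basis"

text \<open>Differential of the tensor square, Koszul sign rule:
  d(a (x) b) = da (x) b + (-1)^|a| a (x) db.\<close>
definition bd2_basis :: "nat set \<times> nat set \<Rightarrow> ('k::comm_ring_1) chain2" where
  "bd2_basis p = (\<lambda>q. (if snd q = snd p then bd_basis (fst p) (fst q) else 0)
      + (-1) ^ card (fst p) * (if fst q = fst p then bd_basis (snd p) (snd q) else 0))"

definition bd2 :: "nat \<Rightarrow> ('k::comm_ring_1) chain2 \<Rightarrow> 'k chain2" where
  "bd2 d = lin_ext (simplices2 d) bd2_basis"

definition hom_diff ::
  "(('b \<Rightarrow> 'k::comm_ring_1) \<Rightarrow> ('b \<Rightarrow> 'k)) \<Rightarrow> (('a \<Rightarrow> 'k) \<Rightarrow> ('a \<Rightarrow> 'k)) \<Rightarrow> nat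
     \<Rightarrow> (('a \<Rightarrow> 'k) \<Rightarrow> ('b \<Rightarrow> 'k)) \<Rightarrow> (('a \<Rightarrow> 'k) \<Rightarrow> ('b \<Rightarrow> 'k))" where
  "hom_diff dY dX deg f = (\<lambda>x t. dY (f x) t - (-1) ^ deg * f (dX x) t)"

definition eps_map :: "(unit \<Rightarrow> 'k::comm_ring_1) \<Rightarrow> 'k chain" where
  "eps_map c = (\<lambda>T. if T = {} then c () else 0)"

text \<open>The sign of the permutation pi sorting the concatenated
sequence is (-1)^(number of inversions) = (-1)^#{(a,b) in A x B. b < a}.\<close>
definition join_basis :: "nat set \<times> nat set \<Rightarrow> ('k::comm_ring_1) chain" where
  "join_basis p = (\<lambda>T. if fst p \<inter> snd p = {} \<and> T = fst p \<union> snd p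
      then (-1) ^ card {(a, b). a \<in> fst p \<and> b \<in> snd p \<and> b < a} else 0)"

definition join :: "nat \<Rightarrow> ('k::comm_ring_1) chain2 \<Rightarrow> 'k chain" where
  "join d = lin_ext (simplices2 d) join_basis"

definition coprod_basis :: "nat set \<Rightarrow> ('k::comm_ring_1) chain2" where
  "coprod_basis S = (\<lambda>q. \<Sum>v\<in>S. if fst q = {u\<in>S. u \<le> v} \<and> snd q = {u\<in>S. v \<le> u}
      then face_sign S v else 0)"

definition coprod :: "nat \<Rightarrow> ('k::comm_ring_1) chain \<Rightarrow> 'k chain2" where
  "coprod d = lin_ext (simplices d) coprod_basis"

definition eps_tensor_id :: "('k::comm_ring_1) chain \<Rightarrow> 'k chain2" where
  "eps_tensor_id x = (\<lambda>q. if fst q = {} then x (snd q) else 0)"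

definition id_tensor_eps :: "('k::comm_ring_1) chain \<Rightarrow> 'k chain2" where
  "id_tensor_eps x = (\<lambda>q. if snd q = {} then x (fst q) else 0)"

text \<open>Morphisms of the augmented simplex category from d to e: order-preserving maps
{1..d} -> {1..e}, and the induced chain maps (degenerate images are 0).\<close>
definition aug_simplicial_map :: "nat \<Rightarrow> nat \<Rightarrow> (nat \<Rightarrow> nat) \<Rightarrow> bool" where
  "aug_simplicial_map d e f \<longleftrightarrow> f ` verts d \<subseteq> verts e \<and> mono_on (verts d) f"

definition push_basis :: "(nat \<Rightarrow> nat) \<Rightarrow> nat set \<Rightarrow> ('k::comm_ring_1) chain" where
  "push_basis f S = (\<lambda>T. if inj_on f S \<and> T = f ` S then 1 else 0)"

definition push :: "nat \<Rightarrow> (nat \<Rightarrow> nat) \<Rightarrow> ('k::comm_ring_1) chain \<Rightarrow> 'k chain" where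
  "push d f = lin_ext (simplices d) (push_basis f)"

definition push2 :: "nat \<Rightarrow> (nat \<Rightarrow> nat) \<Rightarrow> ('k::comm_ring_1) chain2 \<Rightarrow> 'k chain2" where
  "push2 d f = lin_ext (simplices2 d)
     (\<lambda>p q. push_basis f (fst p) (fst q) * push_basis f (snd p) (snd q))"

end

theory Submission
  imports Defs
begin

(* Every identity is linear, so it suffices to check it on basis simplices, where it becomes a
   sign computation. Writing inversions A B for the number of pairs a in A, b in B with b < a,
   the join of [A] and [B] is (-1)^(inversions A B) [A u B] for disjoint A, B. Removing a vertex
   v of A u B changes this sign exactly by the face sign of v in A, resp. by (-1)^|A| times the
   face sign of v in B, which is the Leibniz rule; if A and B share one vertex w, the two faces
   dropping w have opposite signs, and if they share more, no face is disjoint.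
   For the coproduct, the terms of d(mu[S]) + mu(d[S]) that delete a vertex other than the
   splitting vertex cancel in pairs; those that delete the splitting vertex run over all cuts of
   S into an initial and a final segment twice, once with a plus and once with a minus sign, and
   only the two extreme cuts ([empty], S) and (S, [empty]) survive.
   For naturality, an order-preserving map is either injective on a simplex, hence strictly
   monotone there and preserving every sign, or it identifies two vertices, and then it kills
   every summand. *)

lemma lin_ext_comp:
  "lin_ext J G (lin_ext I F x) = lin_ext I (\<lambda>i. lin_ext J G (F i)) x"
  unfolding lin_ext_def
  by (rule ext) (simp add: sum_distrib_left sum_distrib_right sum.swap[of _ J] mult.assoc)

lemma lin_ext_cong: "(\<And>i. i \<in> I \<Longrightarrow> F i = G i) \<Longrightarrow> lin_ext I F x = lin_ext I G x"
  unfolding lin_ext_def by (rule ext) (auto intro: sum.cong)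

lemma lin_ext_combination:
  assumes "finite I" "h ` V \<subseteq> I"
  shows "lin_ext I G (\<lambda>p. \<Sum>v\<in>V. if p = h v then c v else 0) t = (\<Sum>v\<in>V. c v * G (h v) t)"
proof -
  have "lin_ext I G (\<lambda>p. \<Sum>v\<in>V. if p = h v then c v else 0) t
      = (\<Sum>p\<in>I. \<Sum>v\<in>V. if p = h v then c v * G p t else 0)"
    unfolding lin_ext_def sum_distrib_right by (intro sum.cong refl) simp
  also have "\<dots> = (\<Sum>v\<in>V. \<Sum>p\<in>I. if p = h v then c v * G p t else 0)"
    by (rule sum.swap)
  also have "\<dots> = (\<Sum>v\<in>V. c v * G (h v) t)"
    using assms by (intro sum.cong) (auto simp: sum.delta)
  finally show ?thesis .
qed

lemma lin_ext_single:
  assumes "finite I" "a \<in> I"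
  shows "lin_ext I G (\<lambda>p. if p = a then c else 0) t = c * G a t"
  using lin_ext_combination[OF assms(1), of "\<lambda>_. a" "{()}" G "\<lambda>_. c"] assms by simp

lemma power_minus_one_parity_cong:
  "even m = even n \<Longrightarrow> (-1::'k::comm_ring_1) ^ m = (-1) ^ n"
  by (simp add: minus_one_power_iff)

lemma power_minus_one_parity_opposite:
  "even m \<noteq> even n \<Longrightarrow> (-1::'k::comm_ring_1) ^ m = - ((-1) ^ n)"
  by (auto simp: minus_one_power_iff)

lemma finite_simplices [simp]: "finite (simplices d)"
  by (simp add: simplices_def verts_def)

lemma finite_simplices2 [simp]: "finite (simplices2 d)"
  by (simp add: simplices2_def)

lemma simplices_finite: "S \<in> simplices d \<Longrightarrow> finite S"
  by (auto simp: simplices_def verts_def intro: finite_subset)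

lemma empty_in_simplices [simp]: "{} \<in> simplices d"
  by (simp add: simplices_def)

lemma mem_simplices2_iff [simp]: "(A, B) \<in> simplices2 d \<longleftrightarrow> A \<in> simplices d \<and> B \<in> simplices d"
  by (simp add: simplices2_def)

lemma subset_in_simplices: "S \<in> simplices d \<Longrightarrow> T \<subseteq> S \<Longrightarrow> T \<in> simplices d"
  by (auto simp: simplices_def)

lemma Un_in_simplices: "A \<in> simplices d \<Longrightarrow> B \<in> simplices d \<Longrightarrow> A \<union> B \<in> simplices d"
  by (auto simp: simplices_def)

lemma chains_vanish: "x \<in> chains d \<Longrightarrow> T \<notin> simplices d \<Longrightarrow> x T = 0"
  by (auto simp: chains_def)

lemma eps_map_degree: "eps_map c T \<noteq> 0 \<Longrightarrow> card T = 0"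
  by (simp add: eps_map_def split: if_splits)

lemma join_basis_degree:
  assumes "p \<in> simplices2 d" "join_basis p T \<noteq> 0"
  shows "card T = card (fst p) + card (snd p)"
  using assms
  by (cases p) (auto simp: join_basis_def simplices_finite card_Un_disjoint split: if_splits)

abbreviation lower :: "nat set \<Rightarrow> nat \<Rightarrow> nat set" where
  "lower S v \<equiv> {u\<in>S. u \<le> v}"

abbreviation upper :: "nat set \<Rightarrow> nat \<Rightarrow> nat set" where
  "upper S v \<equiv> {u\<in>S. v \<le> u}"

lemma coprod_basis_eq:
  "coprod_basis S q = (\<Sum>v\<in>S. if q = (lower S v, upper S v) then face_sign S v else 0)"
  unfolding coprod_basis_def by (cases q) simp

lemma coprod_basis_degree:
  assumes "S \<in> simplices d" "(coprod_basis S q :: 'k::comm_ring_1) \<noteq> 0"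
  shows "card (fst q) + card (snd q) = card S + 1"
proof -
  obtain v where "v \<in> S" "(if q = (lower S v, upper S v) then face_sign S v else 0 :: 'k) \<noteq> 0"
    using assms(2) unfolding coprod_basis_eq by (rule sum.not_neutral_contains_not_neutral)
  then have v: "v \<in> S" "q = (lower S v, upper S v)"
    by (simp_all split: if_splits)
  have "card (lower S v) + card (upper S v)
      = card (lower S v \<union> upper S v) + card (lower S v \<inter> upper S v)"
    using simplices_finite[OF assms(1)] by (intro card_Un_Int) simp_all
  moreover have "lower S v \<union> upper S v = S" "lower S v \<inter> upper S v = {v}"
    using v by auto
  ultimately show ?thesis using v by simp
qed

lemma lin_ext_eps_map: "lin_ext (simplices d) F (eps_map c) = (\<lambda>t. c () * F {} t)"
  unfolding eps_map_def by (rule ext, rule lin_ext_single) simp_all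

lemma hom_diff_eps_map: "hom_diff (bd d) (\<lambda>c. \<lambda>_. 0) 0 eps_map c = (\<lambda>_. 0)"
  unfolding hom_diff_def bd_def lin_ext_eps_map by (simp add: bd_basis_def eps_map_def)

lemma coprod_eps_map: "coprod d (eps_map c) = (\<lambda>_. 0)"
  unfolding coprod_def lin_ext_eps_map by (simp add: coprod_basis_def)

lemma push_eps_map: "push d f (eps_map c) = eps_map c"
  unfolding push_def lin_ext_eps_map by (auto simp: push_basis_def eps_map_def)

lemma eps_tensor_id_eq_sum:
  assumes "x \<in> chains d"
  shows "eps_tensor_id x = (\<lambda>q. \<Sum>S\<in>simplices d. if q = ({}, S) then x S else 0)"
proof
  fix q :: "nat set \<times> nat set"
  show "eps_tensor_id x q = (\<Sum>S\<in>simplices d. if q = ({}, S) then x S else 0)"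
    using chains_vanish[OF assms] by (cases q) (auto simp: eps_tensor_id_def)
qed

lemma id_tensor_eps_eq_sum:
  assumes "x \<in> chains d"
  shows "id_tensor_eps x = (\<lambda>q. \<Sum>S\<in>simplices d. if q = (S, {}) then x S else 0)"
proof
  fix q :: "nat set \<times> nat set"
  show "id_tensor_eps x q = (\<Sum>S\<in>simplices d. if q = (S, {}) then x S else 0)"
    using chains_vanish[OF assms] by (cases q) (auto simp: id_tensor_eps_def)
qed

definition inversions :: "nat set \<Rightarrow> nat set \<Rightarrow> nat" where
  "inversions A B = card {(a, b). a \<in> A \<and> b \<in> B \<and> b < a}"

lemma join_basis_eq:
  "join_basis (A, B) T = (if A \<inter> B = {} \<and> T = A \<union> B then (-1) ^ inversions A B else 0)"
  by (simp add: join_basis_def inversions_def)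

lemma join_basis_empty_left: "join_basis ({}, S) T = (if T = S then 1 else 0)"
  by (simp add: join_basis_eq inversions_def)

lemma join_basis_empty_right: "join_basis (S, {}) T = (if T = S then 1 else 0)"
  by (simp add: join_basis_eq inversions_def)

lemma join_eps_tensor_id:
  assumes "x \<in> chains d"
  shows "join d (eps_tensor_id x) = x"
proof
  fix T
  have "join d (eps_tensor_id x) T = (\<Sum>S\<in>simplices d. x S * join_basis ({}, S) T)"
    unfolding join_def eps_tensor_id_eq_sum[OF assms]
    by (rule lin_ext_combination[where h = "\<lambda>S. ({}, S)"]) auto
  also have "\<dots> = x T"
    using chains_vanish[OF assms]
    by (simp add: join_basis_empty_left join_basis_empty_right if_distrib cong: if_cong)
  finally show "join d (eps_tensor_id x) T = x T" .
qed

lemma join_id_tensor_eps: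
  assumes "x \<in> chains d"
  shows "join d (id_tensor_eps x) = x"
proof
  fix T
  have "join d (id_tensor_eps x) T = (\<Sum>S\<in>simplices d. x S * join_basis (S, {}) T)"
    unfolding join_def id_tensor_eps_eq_sum[OF assms]
    by (rule lin_ext_combination[where h = "\<lambda>S. (S, {})"]) auto
  also have "\<dots> = x T"
    using chains_vanish[OF assms]
    by (simp add: join_basis_empty_left join_basis_empty_right if_distrib cong: if_cong)
  finally show "join d (id_tensor_eps x) T = x T" .
qed

section \<open>The join is a chain map\<close>

lemma inversions_remove_left:
  assumes "finite A" "finite B" "w \<in> A"
  shows "inversions A B = inversions (A - {w}) B + card {b\<in>B. b < w}"
proof -
  let ?P = "{(a, b). a \<in> A - {w} \<and> b \<in> B \<and> b < a}"
  have split: "{(a, b). a \<in> A \<and> b \<in> B \<and> b < a} = ?P \<union> Pair w ` {b\<in>B. b < w}"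
    using assms(3) by auto
  have "finite ?P"
    using assms(1,2) by (auto intro: finite_subset[of _ "A \<times> B"])
  then have "card (?P \<union> Pair w ` {b\<in>B. b < w}) = card ?P + card (Pair w ` {b\<in>B. b < w})"
    using assms(2) by (intro card_Un_disjoint) auto
  moreover have "card (Pair w ` {b\<in>B. b < w}) = card {b\<in>B. b < w}"
    by (rule card_image) (auto simp: inj_on_def)
  ultimately show ?thesis unfolding inversions_def split by simp
qed

lemma inversions_remove_right:
  assumes "finite A" "finite B" "w \<in> B"
  shows "inversions A B = inversions A (B - {w}) + card {a\<in>A. w < a}"
proof -
  let ?P = "{(a, b). a \<in> A \<and> b \<in> B - {w} \<and> b < a}"
  have split: "{(a, b). a \<in> A \<and> b \<in> B \<and> b < a} = ?P \<union> (\<lambda>a. (a, w)) ` {a\<in>A. w < a}"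
    using assms(3) by auto
  have "finite ?P"
    using assms(1,2) by (auto intro: finite_subset[of _ "A \<times> B"])
  then have "card (?P \<union> (\<lambda>a. (a, w)) ` {a\<in>A. w < a}) = card ?P + card ((\<lambda>a. (a, w)) ` {a\<in>A. w < a})"
    using assms(1) by (intro card_Un_disjoint) auto
  moreover have "card ((\<lambda>a. (a, w)) ` {a\<in>A. w < a}) = card {a\<in>A. w < a}"
    by (rule card_image) (auto simp: inj_on_def)
  ultimately show ?thesis unfolding inversions_def split by simp
qed

lemma card_less_Un_disjoint:
  assumes "finite (A :: nat set)" "finite B" "A \<inter> B = {}"
  shows "card {u\<in>A \<union> B. u < v} = card {u\<in>A. u < v} + card {u\<in>B. u < v}"
proof -
  have "{u\<in>A \<union> B. u < v} = {u\<in>A. u < v} \<union> {u\<in>B. u < v}" by auto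
  then show ?thesis using assms by (simp add: card_Un_disjoint disjoint_iff)
qed

lemma card_below_above:
  assumes "finite (A :: nat set)"
  shows "card A = card {a\<in>A. a < w} + card {a\<in>A. w < a} + (if w \<in> A then 1 else 0)"
proof -
  have A: "A = ({a\<in>A. a < w} \<union> {a\<in>A. w < a}) \<union> (A \<inter> {w})"
    using less_linear[of _ w] by blast
  have "card A = card ({a\<in>A. a < w} \<union> {a\<in>A. w < a}) + card (A \<inter> {w})"
    using assms by (subst A, intro card_Un_disjoint) auto
  also have "card ({a\<in>A. a < w} \<union> {a\<in>A. w < a}) = card {a\<in>A. a < w} + card {a\<in>A. w < a}"
    using assms by (intro card_Un_disjoint) auto
  finally show ?thesis by auto
qed

lemma join_face_sign_left:
  assumes "finite A" "finite B" "A \<inter> B = {}" "v \<in> A"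
  shows "(-1) ^ inversions A B * face_sign (A \<union> B) v
    = face_sign A v * ((-1) ^ inversions (A - {v}) B :: 'k::comm_ring_1)"
  unfolding face_sign_def power_add[symmetric]
    inversions_remove_left[OF assms(1,2,4)] card_less_Un_disjoint[OF assms(1-3)]
  by (rule power_minus_one_parity_cong) presburger

lemma join_face_sign_right:
  assumes "finite A" "finite B" "A \<inter> B = {}" "v \<in> B"
  shows "(-1) ^ inversions A B * face_sign (A \<union> B) v
    = (-1) ^ card A * (face_sign B v * ((-1) ^ inversions A (B - {v}) :: 'k::comm_ring_1))"
proof -
  have "v \<notin> A" using assms(3,4) by auto
  then show ?thesis
    unfolding face_sign_def power_add[symmetric] inversions_remove_right[OF assms(1,2,4)]
      card_less_Un_disjoint[OF assms(1-3)] card_below_above[OF assms(1), of v]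
    by (intro power_minus_one_parity_cong) (simp, presburger)
qed

lemma join_face_sign_overlap:
  assumes "finite A" "finite B" "w \<in> A" "w \<in> B"
  shows "face_sign A w * (-1) ^ inversions (A - {w}) B
    + (-1) ^ card A * (face_sign B w * (-1) ^ inversions A (B - {w})) = (0::'k::comm_ring_1)"
proof -
  have "card A = card {a\<in>A. a < w} + card {a\<in>A. w < a} + 1"
    using card_below_above[OF assms(1), of w] assms(3) by simp
  then have "even (card {a\<in>A. a < w} + inversions (A - {w}) B)
      \<noteq> even (card A + (card {b\<in>B. b < w} + inversions A (B - {w})))"
    using inversions_remove_left[OF assms(1-3)] inversions_remove_right[OF assms(1,2,4)] by presburger
  then have "(-1::'k) ^ (card {a\<in>A. a < w} + inversions (A - {w}) B)
      = - ((-1) ^ (card A + (card {b\<in>B. b < w} + inversions A (B - {w}))))"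
    by (rule power_minus_one_parity_opposite)
  then show ?thesis
    unfolding face_sign_def power_add[symmetric] by simp
qed

lemma bd2_basis_eq:
  "(bd2_basis (A, B) q :: 'k::comm_ring_1) = (\<Sum>v\<in>A. if q = (A - {v}, B) then face_sign A v else 0)
     + (\<Sum>v\<in>B. if q = (A, B - {v}) then (-1) ^ card A * face_sign B v else 0)"
proof (cases q)
  case (Pair a b)
  have first: "(if b = B then bd_basis A a else 0)
      = (\<Sum>v\<in>A. if (a, b) = (A - {v}, B) then face_sign A v else (0::'k))"
    by (cases "b = B") (simp_all add: bd_basis_def)
  have second: "(-1) ^ card A * (if a = A then bd_basis B b else 0)
      = (\<Sum>v\<in>B. if (a, b) = (A, B - {v}) then (-1) ^ card A * face_sign B v else (0::'k))"
    by (cases "a = A") (simp_all add: bd_basis_def sum_distrib_left if_distrib cong: if_cong)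
  show ?thesis unfolding Pair bd2_basis_def fst_conv snd_conv first second ..
qed

lemma join_bd2_basis:
  assumes "A \<in> simplices d" "B \<in> simplices d"
  shows "join d (bd2_basis (A, B)) t = (\<Sum>v\<in>A. face_sign A v * join_basis (A - {v}, B) t)
      + (-1) ^ card A * (\<Sum>v\<in>B. face_sign B v * (join_basis (A, B - {v}) t :: 'k::comm_ring_1))"
proof -
  have "join d (bd2_basis (A, B)) t
      = lin_ext (simplices2 d) join_basis (\<lambda>q. \<Sum>v\<in>A. if q = (A - {v}, B) then face_sign A v else 0) t
      + lin_ext (simplices2 d) join_basis
          (\<lambda>q. \<Sum>v\<in>B. if q = (A, B - {v}) then (-1) ^ card A * face_sign B v else 0) t"
    unfolding join_def lin_ext_def bd2_basis_eq distrib_right sum.distrib ..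
  also have "\<dots> = (\<Sum>v\<in>A. face_sign A v * join_basis (A - {v}, B) t)
      + (\<Sum>v\<in>B. ((-1) ^ card A * face_sign B v) * (join_basis (A, B - {v}) t :: 'k))"
    using assms by (intro arg_cong2[where f = "(+)"] lin_ext_combination)
      (auto intro: subset_in_simplices)
  finally show ?thesis by (simp add: sum_distrib_left mult.assoc)
qed

lemma join_bd2_basis_disjoint:
  assumes A: "A \<in> simplices d" and B: "B \<in> simplices d" and disj: "A \<inter> B = {}"
  shows "join d (bd2_basis (A, B)) t = (-1) ^ inversions A B * (bd_basis (A \<union> B) t :: 'k::comm_ring_1)"
proof -
  have fin: "finite A" "finite B"
    using A B by (simp_all add: simplices_finite)
  let ?term = "\<lambda>v. if t = A \<union> B - {v} then (-1) ^ inversions A B * face_sign (A \<union> B) v else (0::'k)"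
  have "(-1) ^ inversions A B * bd_basis (A \<union> B) t = (\<Sum>v\<in>A \<union> B. ?term v)"
    unfolding bd_basis_def sum_distrib_left by (intro sum.cong) auto
  also have "\<dots> = (\<Sum>v\<in>A. ?term v) + (\<Sum>v\<in>B. ?term v)"
    using fin disj by (intro sum.union_disjoint) auto
  also have "(\<Sum>v\<in>A. ?term v) = (\<Sum>v\<in>A. face_sign A v * join_basis (A - {v}, B) t)"
  proof (intro sum.cong refl)
    fix v assume v: "v \<in> A"
    have "A \<union> B - {v} = (A - {v}) \<union> B" using v disj by auto
    then show "?term v = face_sign A v * join_basis (A - {v}, B) t"
      using join_face_sign_left[OF fin disj v] disj by (auto simp: join_basis_eq)
  qed
  also have "(\<Sum>v\<in>B. ?term v) = (-1) ^ card A * (\<Sum>v\<in>B. face_sign B v * join_basis (A, B - {v}) t)"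
    unfolding sum_distrib_left
  proof (intro sum.cong refl)
    fix v assume v: "v \<in> B"
    have "A \<union> B - {v} = A \<union> (B - {v})" using v disj by auto
    then show "?term v = (-1) ^ card A * (face_sign B v * join_basis (A, B - {v}) t)"
      using join_face_sign_right[OF fin disj v] disj by (auto simp: join_basis_eq)
  qed
  finally show ?thesis
    unfolding join_bd2_basis[OF A B] by simp
qed

lemma join_bd2_basis_single_overlap:
  assumes A: "A \<in> simplices d" and B: "B \<in> simplices d" and w: "A \<inter> B = {w}"
  shows "join d (bd2_basis (A, B)) t = (0::'k::comm_ring_1)"
proof -
  have fin: "finite A" "finite B"
    using A B by (simp_all add: simplices_finite)
  have wAB: "w \<in> A" "w \<in> B" using w by auto
  have "(\<Sum>v\<in>A. face_sign A v * join_basis (A - {v}, B) t)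
      = (\<Sum>v\<in>A. if v = w then face_sign A w * join_basis (A - {w}, B) t else (0::'k))"
    using wAB by (intro sum.cong refl) (auto simp: join_basis_eq)
  also have "\<dots> = face_sign A w * (if t = A \<union> B then (-1) ^ inversions (A - {w}) B else 0)"
  proof -
    have "(A - {w}) \<inter> B = {}" "(A - {w}) \<union> B = A \<union> B" using w by auto
    then show ?thesis using fin wAB by (simp add: join_basis_eq)
  qed
  finally have first: "(\<Sum>v\<in>A. face_sign A v * join_basis (A - {v}, B) t)
      = face_sign A w * (if t = A \<union> B then (-1) ^ inversions (A - {w}) B else 0 :: 'k)" .
  have "(\<Sum>v\<in>B. face_sign B v * join_basis (A, B - {v}) t)
      = (\<Sum>v\<in>B. if v = w then face_sign B w * join_basis (A, B - {w}) t else (0::'k))"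
    using wAB by (intro sum.cong refl) (auto simp: join_basis_eq)
  also have "\<dots> = face_sign B w * (if t = A \<union> B then (-1) ^ inversions A (B - {w}) else 0)"
  proof -
    have "A \<inter> (B - {w}) = {}" "A \<union> (B - {w}) = A \<union> B" using w by auto
    then show ?thesis using fin wAB by (simp add: join_basis_eq)
  qed
  finally have second: "(\<Sum>v\<in>B. face_sign B v * join_basis (A, B - {v}) t)
      = face_sign B w * (if t = A \<union> B then (-1) ^ inversions A (B - {w}) else 0 :: 'k)" .
  show ?thesis
    using join_face_sign_overlap[OF fin wAB, where 'k = 'k]
    unfolding join_bd2_basis[OF A B] first second
    by (simp add: distrib_left mult.assoc[symmetric])
qed

lemma join_bd2_basis_overlap:
  assumes A: "A \<in> simplices d" and B: "B \<in> simplices d" and "A \<inter> B \<noteq> {}"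
  shows "join d (bd2_basis (A, B)) t = (0::'k::comm_ring_1)"
proof (cases "\<exists>w. A \<inter> B = {w}")
  case True
  then show ?thesis using join_bd2_basis_single_overlap[OF A B] by blast
next
  case False
  then obtain w w' where w: "w \<in> A" "w \<in> B" "w' \<in> A" "w' \<in> B" "w' \<noteq> w"
    using assms(3) by blast
  have "(\<Sum>v\<in>A. face_sign A v * join_basis (A - {v}, B) t) = (0::'k)"
    using w by (intro sum.neutral) (auto simp: join_basis_eq)
  moreover have "(\<Sum>v\<in>B. face_sign B v * join_basis (A, B - {v}) t) = (0::'k)"
    using w by (intro sum.neutral) (auto simp: join_basis_eq)
  ultimately show ?thesis
    unfolding join_bd2_basis[OF A B] by simp
qed

lemma lin_ext_join_basis:
  assumes "A \<in> simplices d" "B \<in> simplices d"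
  shows "lin_ext (simplices d) F (join_basis (A, B)) t =
    (if A \<inter> B = {} then (-1) ^ inversions A B * F (A \<union> B) t else (0::'k::comm_ring_1))"
proof (cases "A \<inter> B = {}")
  case True
  then have "join_basis (A, B) = (\<lambda>T. if T = A \<union> B then (-1) ^ inversions A B else (0::'k))"
    by (auto simp: join_basis_eq)
  then show ?thesis
    using True assms by (simp add: lin_ext_single Un_in_simplices)
next
  case False
  then show ?thesis unfolding lin_ext_def join_basis_eq by simp
qed

lemma bd_join_basis_eq_join_bd2_basis:
  assumes "p \<in> simplices2 d"
  shows "bd d (join_basis p) = (join d (bd2_basis p) :: 'k::comm_ring_1 chain)"
proof
  fix t
  obtain A B where p: "p = (A, B)" and A: "A \<in> simplices d" and B: "B \<in> simplices d"
    using assms by (cases p) auto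
  show "bd d (join_basis p) t = (join d (bd2_basis p) t :: 'k)"
    unfolding p bd_def lin_ext_join_basis[OF A B]
    using join_bd2_basis_disjoint[OF A B, where 'k = 'k] join_bd2_basis_overlap[OF A B, where 'k = 'k]
    by simp
qed

lemma join_chain_map: "hom_diff (bd d) (bd2 d) 0 (join d) y = (\<lambda>_. 0)"
proof -
  have "bd d (join d y) = lin_ext (simplices2 d) (\<lambda>p. bd d (join_basis p)) y"
    unfolding join_def bd_def lin_ext_comp ..
  also have "\<dots> = lin_ext (simplices2 d) (\<lambda>p. join d (bd2_basis p)) y"
    by (intro lin_ext_cong bd_join_basis_eq_join_bd2_basis)
  also have "\<dots> = join d (bd2 d y)"
    unfolding join_def bd2_def lin_ext_comp ..
  finally show ?thesis unfolding hom_diff_def by simp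
qed

section \<open>The homotopy formula for the coproduct\<close>

definition cuts :: "nat set \<Rightarrow> (nat set \<times> nat set) set" where
  "cuts S = {(L, R). L \<subseteq> S \<and> R = S - L \<and> (\<forall>x\<in>L. \<forall>y\<in>S. y < x \<longrightarrow> y \<in> L)}"

lemma cuts_eq_strict_below:
  assumes "finite S"
  shows "cuts S = insert (S, {}) ((\<lambda>v. ({x\<in>S. x < v}, upper S v)) ` S)"
proof (intro equalityI subsetI)
  fix c assume "c \<in> cuts S"
  then obtain L where c: "c = (L, S - L)" and L: "L \<subseteq> S" "\<forall>x\<in>L. \<forall>y\<in>S. y < x \<longrightarrow> y \<in> L"
    unfolding cuts_def by blast
  show "c \<in> insert (S, {}) ((\<lambda>v. ({x\<in>S. x < v}, upper S v)) ` S)"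
  proof (cases "S - L = {}")
    case True
    then show ?thesis using c L by auto
  next
    case False
    define v where "v = Min (S - L)"
    have fin: "finite (S - L)" using assms by simp
    have v: "v \<in> S - L" "\<And>x. x \<in> S - L \<Longrightarrow> v \<le> x"
      using Min_in[OF fin False] Min_le[OF fin] unfolding v_def by auto
    have "x < v" if "x \<in> L" for x
    proof (rule ccontr)
      assume "\<not> x < v"
      then have "v \<in> L" using L v(1) that by (cases "v = x") auto
      then show False using v(1) by simp
    qed
    moreover have "x \<in> L" if "x \<in> S" "x < v" for x
      using v(2)[of x] that by force
    ultimately have "L = {x\<in>S. x < v}"
      using L(1) by auto
    then have "c = ({x\<in>S. x < v}, upper S v)"
      unfolding c by auto
    then show ?thesis using v(1) by blast
  qed
next
  fix c assume "c \<in> insert (S, {}) ((\<lambda>v. ({x\<in>S. x < v}, upper S v)) ` S)"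
  then show "c \<in> cuts S" unfolding cuts_def by auto
qed

lemma cuts_eq_strict_above:
  assumes "finite S"
  shows "cuts S = insert ({}, S) ((\<lambda>v. (lower S v, {x\<in>S. v < x})) ` S)"
proof (intro equalityI subsetI)
  fix c assume "c \<in> cuts S"
  then obtain L where c: "c = (L, S - L)" and L: "L \<subseteq> S" "\<forall>x\<in>L. \<forall>y\<in>S. y < x \<longrightarrow> y \<in> L"
    unfolding cuts_def by blast
  show "c \<in> insert ({}, S) ((\<lambda>v. (lower S v, {x\<in>S. v < x})) ` S)"
  proof (cases "L = {}")
    case True
    then show ?thesis using c by auto
  next
    case False
    define v where "v = Max L"
    have fin: "finite L" using assms L(1) by (rule rev_finite_subset)
    have v: "v \<in> L" "\<And>x. x \<in> L \<Longrightarrow> x \<le> v"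
      using Max_in[OF fin False] Max_ge[OF fin] unfolding v_def by auto
    have "L = lower S v"
      using L v by (auto simp: le_less)
    then have "c = (lower S v, {x\<in>S. v < x})"
      unfolding c by auto
    then show ?thesis using v(1) L(1) by blast
  qed
next
  fix c assume "c \<in> insert ({}, S) ((\<lambda>v. (lower S v, {x\<in>S. v < x})) ` S)"
  then show "c \<in> cuts S" unfolding cuts_def by auto
qed

lemma sum_if_eq_image:
  assumes "finite S" "inj_on h S"
  shows "(\<Sum>v\<in>S. if q = h v then c else 0) = (if q \<in> h ` S then c else (0::'a::comm_monoid_add))"
  using sum.reindex[OF assms(2), of "\<lambda>p. if q = p then c else 0"] assms(1) by simp

text \<open>Both families of splittings of S enumerate the cuts of S, each missing one end.\<close>
lemma cuts_telescope:
  assumes "finite S"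
  shows "(\<Sum>v\<in>S. if q = ({x\<in>S. x < v}, upper S v) then 1 else 0)
       - (\<Sum>v\<in>S. if q = (lower S v, {x\<in>S. v < x}) then 1 else 0)
       = (if q = ({}, S) then 1 else 0) - (if q = (S, {}) then (1::'k::comm_ring_1) else 0)"
proof -
  let ?X = "(\<lambda>v. ({x\<in>S. x < v}, upper S v)) ` S"
  let ?Y = "(\<lambda>v. (lower S v, {x\<in>S. v < x})) ` S"
  have "inj_on (\<lambda>v. ({x\<in>S. x < v}, upper S v)) S"
  proof (rule inj_onI)
    fix v w assume "v \<in> S" "w \<in> S" "({x\<in>S. x < v}, upper S v) = ({x\<in>S. x < w}, upper S w)"
    then have "v \<in> upper S w" "w \<in> upper S v" by auto
    then show "v = w" by simp
  qed
  moreover have "inj_on (\<lambda>v. (lower S v, {x\<in>S. v < x})) S"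
  proof (rule inj_onI)
    fix v w assume "v \<in> S" "w \<in> S" "(lower S v, {x\<in>S. v < x}) = (lower S w, {x\<in>S. w < x})"
    then have "v \<in> lower S w" "w \<in> lower S v" by auto
    then show "v = w" by simp
  qed
  ultimately have sums:
    "(\<Sum>v\<in>S. if q = ({x\<in>S. x < v}, upper S v) then 1 else 0) = (of_bool (q \<in> ?X) :: 'k)"
    "(\<Sum>v\<in>S. if q = (lower S v, {x\<in>S. v < x}) then 1 else 0) = (of_bool (q \<in> ?Y) :: 'k)"
    using assms by (simp_all add: sum_if_eq_image)
  have "(S, {}) \<notin> ?X" "({}, S) \<notin> ?Y" by auto
  then have "of_bool (q \<in> insert (S, {}) ?X) = (of_bool (q \<in> ?X) + of_bool (q = (S, {})) :: 'k)"
    "of_bool (q \<in> insert ({}, S) ?Y) = (of_bool (q \<in> ?Y) + of_bool (q = ({}, S)) :: 'k)"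
    by auto
  moreover have "insert (S, {}) ?X = insert ({}, S) ?Y"
    using cuts_eq_strict_below[OF assms] cuts_eq_strict_above[OF assms] by simp
  ultimately have "of_bool (q \<in> ?X) + of_bool (q = (S, {}))
      = (of_bool (q \<in> ?Y) + of_bool (q = ({}, S)) :: 'k)"
    by simp
  then show ?thesis
    unfolding sums by (simp add: of_bool_def algebra_simps eq_diff_eq diff_eq_eq)
qed

text \<open>The summands of the two sides of the homotopy formula at a basis simplex S:
  \<open>front_face S v u\<close> and \<open>back_face S v u\<close> are the terms of \<open>\<partial>(\<mu>[S])\<close> deleting u from the front,
  resp. back, factor of the splitting of S at v, and \<open>face_cut S u v\<close> is the term of
  \<open>\<mu>(\<partial>[S])\<close> splitting the face \<open>S - {u}\<close> at v.\<close>

definition front_face :: "nat set \<Rightarrow> nat \<Rightarrow> nat \<Rightarrow> nat set \<times> nat set \<Rightarrow> 'k::comm_ring_1" where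
  "front_face S v u q = face_sign S v *
     (if q = (lower S v - {u}, upper S v) then face_sign (lower S v) u else 0)"

definition back_face :: "nat set \<Rightarrow> nat \<Rightarrow> nat \<Rightarrow> nat set \<times> nat set \<Rightarrow> 'k::comm_ring_1" where
  "back_face S v u q = face_sign S v *
     (if q = (lower S v, upper S v - {u}) then (-1) ^ card (lower S v) * face_sign (upper S v) u else 0)"

definition face_cut :: "nat set \<Rightarrow> nat \<Rightarrow> nat \<Rightarrow> nat set \<times> nat set \<Rightarrow> 'k::comm_ring_1" where
  "face_cut S u v q = face_sign S u *
     (if q = (lower (S - {u}) v, upper (S - {u}) v) then face_sign (S - {u}) v else 0)"

lemma bd2_coprod_basis:
  assumes S: "S \<in> simplices d"
  shows "bd2 d (coprod_basis S) q = (\<Sum>v\<in>S. front_face S v v q + back_face S v v q)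
    + (\<Sum>v\<in>S. \<Sum>u\<in>S. (if u < v then front_face S v u q else 0) + (if v < u then back_face S v u q else 0))"
proof -
  have fin: "finite S" using simplices_finite[OF S] .
  have "bd2 d (coprod_basis S) q = (\<Sum>v\<in>S. face_sign S v * bd2_basis (lower S v, upper S v) q)"
    unfolding bd2_def coprod_basis_eq[abs_def]
    by (rule lin_ext_combination) (auto intro: subset_in_simplices[OF S])
  also have "\<dots> = (\<Sum>v\<in>S. (\<Sum>u\<in>lower S v. front_face S v u q) + (\<Sum>u\<in>upper S v. back_face S v u q))"
    unfolding bd2_basis_eq front_face_def back_face_def distrib_left sum_distrib_left
    by (intro sum.cong refl arg_cong2[where f = "(+)"])
  also have "\<dots> = (\<Sum>v\<in>S. (front_face S v v q + back_face S v v q)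
      + ((\<Sum>u\<in>S. if u < v then front_face S v u q else 0) + (\<Sum>u\<in>S. if v < u then back_face S v u q else 0)))"
  proof (intro sum.cong refl)
    fix v assume v: "v \<in> S"
    have "lower S v = insert v {u\<in>S. u < v}" "upper S v = insert v {u\<in>S. v < u}"
      using v by auto
    then show "(\<Sum>u\<in>lower S v. front_face S v u q) + (\<Sum>u\<in>upper S v. back_face S v u q)
      = (front_face S v v q + back_face S v v q)
        + ((\<Sum>u\<in>S. if u < v then front_face S v u q else 0) + (\<Sum>u\<in>S. if v < u then back_face S v u q else 0))"
      using fin by (simp add: sum.inter_filter)
  qed
  finally show ?thesis by (simp add: sum.distrib)
qed

lemma coprod_bd_basis:
  assumes S: "S \<in> simplices d"
  shows "coprod d (bd_basis S) q = (\<Sum>v\<in>S. \<Sum>u\<in>S. if u \<noteq> v then face_cut S u v q else 0)"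
proof -
  have fin: "finite S" using simplices_finite[OF S] .
  have "coprod d (bd_basis S) q = (\<Sum>u\<in>S. face_sign S u * coprod_basis (S - {u}) q)"
    unfolding coprod_def bd_basis_def[abs_def]
    by (rule lin_ext_combination) (auto intro: subset_in_simplices[OF S])
  also have "\<dots> = (\<Sum>u\<in>S. \<Sum>v\<in>S - {u}. face_cut S u v q)"
    unfolding coprod_basis_eq face_cut_def sum_distrib_left by (intro sum.cong refl)
  also have "\<dots> = (\<Sum>u\<in>S. \<Sum>v\<in>S. if u \<noteq> v then face_cut S u v q else 0)"
  proof (rule sum.cong[OF refl])
    fix u assume "u \<in> S"
    have "S - {u} = {v\<in>S. u \<noteq> v}" by auto
    then show "(\<Sum>v\<in>S - {u}. face_cut S u v q) = (\<Sum>v\<in>S. if u \<noteq> v then face_cut S u v q else 0)"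
      using fin by (simp add: sum.inter_filter)
  qed
  also have "\<dots> = (\<Sum>v\<in>S. \<Sum>u\<in>S. if u \<noteq> v then face_cut S u v q else 0)"
    by (rule sum.swap)
  finally show ?thesis .
qed

lemma front_face_cancel:
  assumes fin: "finite S" and u: "u \<in> S" and uv: "u < v"
  shows "front_face S v u q + face_cut S u v q = (0::'k::comm_ring_1)"
proof -
  have cut: "lower (S - {u}) v = lower S v - {u}" "upper (S - {u}) v = upper S v"
    using uv by auto
  have "{x\<in>lower S v. x < u} = {x\<in>S. x < u}"
    using uv by auto
  moreover have "card {x\<in>S. x < v} = card {x\<in>S - {u}. x < v} + 1"
  proof -
    have "{x\<in>S. x < v} = insert u {x\<in>S - {u}. x < v}" using u uv by auto
    then show ?thesis using fin by simp
  qed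
  ultimately have "face_sign S v * face_sign (lower S v) u = - (face_sign S u * (face_sign (S - {u}) v :: 'k))"
    unfolding face_sign_def power_add[symmetric]
    by (intro power_minus_one_parity_opposite) presburger
  then show ?thesis
    unfolding front_face_def face_cut_def cut by simp
qed

lemma back_face_cancel:
  assumes fin: "finite S" and v: "v \<in> S" and vu: "v < u"
  shows "back_face S v u q + face_cut S u v q = (0::'k::comm_ring_1)"
proof -
  have cut: "lower (S - {u}) v = lower S v" "upper (S - {u}) v = upper S v - {u}"
    using vu by auto
  have "{x\<in>S - {u}. x < v} = {x\<in>S. x < v}"
    using vu by auto
  moreover have "card (lower S v) = card {x\<in>S. x < v} + 1"
  proof -
    have "lower S v = insert v {x\<in>S. x < v}" using v by auto
    then show ?thesis using fin by simp
  qed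
  moreover have "card {x\<in>S. x < u} = card {x\<in>S. x < v} + card {x\<in>upper S v. x < u}"
  proof -
    have "{x\<in>S. x < u} = {x\<in>S. x < v} \<union> {x\<in>upper S v. x < u}" using vu by auto
    then show ?thesis using fin by (simp add: card_Un_disjoint disjoint_iff)
  qed
  ultimately have "face_sign S v * ((-1) ^ card (lower S v) * face_sign (upper S v) u)
      = - (face_sign S u * (face_sign (S - {u}) v :: 'k))"
    unfolding face_sign_def power_add[symmetric]
    by (intro power_minus_one_parity_opposite) presburger
  then show ?thesis
    unfolding back_face_def face_cut_def cut by simp
qed

lemma front_face_diagonal:
  assumes "v \<in> S"
  shows "front_face S v v q = (if q = ({x\<in>S. x < v}, upper S v) then 1 else (0::'k::comm_ring_1))"
proof -
  have "lower S v - {v} = {x\<in>S. x < v}" by auto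
  moreover have "{x\<in>lower S v. x < v} = {x\<in>S. x < v}" by auto
  moreover have "face_sign S v * face_sign S v = (1::'k)"
    unfolding face_sign_def power_add[symmetric] by simp
  ultimately show ?thesis
    by (simp add: front_face_def face_sign_def)
qed

lemma back_face_diagonal:
  assumes "finite S" "v \<in> S"
  shows "back_face S v v q = - (if q = (lower S v, {x\<in>S. v < x}) then 1 else (0::'k::comm_ring_1))"
proof -
  have "upper S v - {v} = {x\<in>S. v < x}" by auto
  moreover have "face_sign (upper S v) v = (1::'k)"
    unfolding face_sign_def by (simp add: not_le[symmetric])
  moreover have "lower S v = insert v {x\<in>S. x < v}"
    using assms(2) by auto
  then have "face_sign S v * (-1) ^ card (lower S v) = (-1::'k)"
    using assms(1) unfolding face_sign_def power_add[symmetric] by simp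
  ultimately show ?thesis
    by (simp add: back_face_def)
qed

lemma coprod_homotopy_basis:
  assumes S: "S \<in> simplices d"
  shows "bd2 d (coprod_basis S) q + coprod d (bd_basis S) q
    = (if q = ({}, S) then 1 else 0) - (if q = (S, {}) then (1::'k::comm_ring_1) else 0)"
proof -
  have fin: "finite S" using simplices_finite[OF S] .
  have "(\<Sum>v\<in>S. \<Sum>u\<in>S. (if u < v then front_face S v u q else 0) + (if v < u then back_face S v u q else 0))
      + (\<Sum>v\<in>S. \<Sum>u\<in>S. if u \<noteq> v then face_cut S u v q else 0)
    = (\<Sum>v\<in>S. \<Sum>u\<in>S. (if u < v then front_face S v u q else 0) + (if v < u then back_face S v u q else 0)
      + (if u \<noteq> v then face_cut S u v q else (0::'k)))"
    by (simp add: sum.distrib)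
  also have "\<dots> = 0"
  proof (intro sum.neutral ballI)
    fix v u assume "v \<in> S" "u \<in> S"
    then show "(if u < v then front_face S v u q else 0) + (if v < u then back_face S v u q else 0)
      + (if u \<noteq> v then face_cut S u v q else 0) = (0::'k)"
      using front_face_cancel[OF fin \<open>u \<in> S\<close>, of v q, where 'k = 'k]
        back_face_cancel[OF fin \<open>v \<in> S\<close>, of u q, where 'k = 'k]
      by (cases u v rule: linorder_cases) simp_all
  qed
  finally have off_diagonal: "(\<Sum>v\<in>S. \<Sum>u\<in>S. (if u < v then front_face S v u q else 0) + (if v < u then back_face S v u q else 0))
      + (\<Sum>v\<in>S. \<Sum>u\<in>S. if u \<noteq> v then face_cut S u v q else 0) = (0::'k)" .
  have "bd2 d (coprod_basis S) q + coprod d (bd_basis S) q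
      = (\<Sum>v\<in>S. front_face S v v q + back_face S v v q :: 'k)"
    unfolding bd2_coprod_basis[OF S] coprod_bd_basis[OF S] using off_diagonal
    by (simp only: add.assoc add_0_right)
  also have "\<dots> = (\<Sum>v\<in>S. if q = ({x\<in>S. x < v}, upper S v) then 1 else 0)
       - (\<Sum>v\<in>S. if q = (lower S v, {x\<in>S. v < x}) then 1 else 0)"
    using fin by (simp add: front_face_diagonal back_face_diagonal sum_subtractf)
  also have "\<dots> = (if q = ({}, S) then 1 else 0) - (if q = (S, {}) then 1 else 0)"
    by (rule cuts_telescope[OF fin])
  finally show ?thesis .
qed

lemma coprod_homotopy:
  assumes x: "x \<in> chains d"
  shows "hom_diff (bd2 d) (bd d) 1 (coprod d) x = (\<lambda>q. eps_tensor_id x q - id_tensor_eps x q)"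
proof
  fix q
  have "bd2 d (coprod d x) q = (\<Sum>S\<in>simplices d. x S * bd2 d (coprod_basis S) q)"
    unfolding coprod_def bd2_def[of d] lin_ext_comp by (simp add: lin_ext_def)
  moreover have "coprod d (bd d x) q = (\<Sum>S\<in>simplices d. x S * coprod d (bd_basis S) q)"
    unfolding bd_def coprod_def[of d] lin_ext_comp by (simp add: lin_ext_def)
  ultimately have "hom_diff (bd2 d) (bd d) 1 (coprod d) x q
      = (\<Sum>S\<in>simplices d. x S * (bd2 d (coprod_basis S) q + coprod d (bd_basis S) q))"
    unfolding hom_diff_def by (simp add: distrib_left sum.distrib)
  also have "\<dots> = (\<Sum>S\<in>simplices d. (if q = ({}, S) then x S else 0) - (if q = (S, {}) then x S else 0))"
    by (intro sum.cong refl) (simp add: coprod_homotopy_basis right_diff_distrib)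
  also have "\<dots> = eps_tensor_id x q - id_tensor_eps x q"
    unfolding sum_subtractf eps_tensor_id_eq_sum[OF x] id_tensor_eps_eq_sum[OF x] ..
  finally show "hom_diff (bd2 d) (bd d) 1 (coprod d) x q = eps_tensor_id x q - id_tensor_eps x q" .
qed

section \<open>Naturality\<close>

lemma aug_simplicial_map_image:
  "aug_simplicial_map d e f \<Longrightarrow> S \<in> simplices d \<Longrightarrow> f ` S \<in> simplices e"
  by (auto simp: aug_simplicial_map_def simplices_def)

lemma aug_simplicial_map_mono_on:
  "aug_simplicial_map d e f \<Longrightarrow> S \<in> simplices d \<Longrightarrow> mono_on S f"
  unfolding aug_simplicial_map_def simplices_def by (auto intro: mono_on_subset)

lemma inversions_image:
  assumes "strict_mono_on (A \<union> B) f"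
  shows "inversions (f ` A) (f ` B) = inversions A B"
proof -
  let ?P = "{(a, b). a \<in> A \<and> b \<in> B \<and> b < a}"
  have "{(a, b). a \<in> f ` A \<and> b \<in> f ` B \<and> b < a} = map_prod f f ` ?P"
    using strict_mono_on_less[OF assms] by auto
  moreover have "inj_on (map_prod f f) ?P"
    using strict_mono_on_imp_inj_on[OF assms] by (auto simp: inj_on_def)
  ultimately show ?thesis
    unfolding inversions_def by (simp add: card_image)
qed

lemma join_push2_basis:
  assumes f: "aug_simplicial_map d e f" and A: "A \<in> simplices d" and B: "B \<in> simplices d"
  shows "join e (\<lambda>q. push_basis f A (fst q) * push_basis f B (snd q)) t =
    (if inj_on f A \<and> inj_on f B then join_basis (f ` A, f ` B) t else (0::'k::comm_ring_1))"
proof -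
  have "(\<lambda>q. push_basis f A (fst q) * push_basis f B (snd q))
      = (\<lambda>q. if q = (f ` A, f ` B) then (if inj_on f A \<and> inj_on f B then 1 else 0) else (0::'k))"
    by (auto simp: push_basis_def prod_eq_iff)
  then show ?thesis
    unfolding join_def
    using aug_simplicial_map_image[OF f A] aug_simplicial_map_image[OF f B]
    by (simp add: lin_ext_single)
qed

lemma push_join_basis:
  assumes f: "aug_simplicial_map d e f" and A: "A \<in> simplices d" and B: "B \<in> simplices d"
  shows "push d f (join_basis (A, B)) t
    = (join e (\<lambda>q. push_basis f A (fst q) * push_basis f B (snd q)) t :: 'k::comm_ring_1)"
proof -
  have "(if A \<inter> B = {} then (-1) ^ inversions A B * push_basis f (A \<union> B) t else (0::'k))
      = (if inj_on f A \<and> inj_on f B then join_basis (f ` A, f ` B) t else 0)"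
  proof (cases "A \<inter> B = {} \<and> inj_on f (A \<union> B)")
    case True
    have "strict_mono_on (A \<union> B) f"
      using True aug_simplicial_map_mono_on[OF f Un_in_simplices[OF A B]] by (simp add: mono_imp_strict_mono)
    moreover have "f ` A \<inter> f ` B = {}"
      using True by (auto simp: inj_on_def)
    ultimately show ?thesis
      using True by (auto simp: join_basis_eq push_basis_def image_Un inversions_image inj_on_Un)
  next
    case False
    then have "\<not> (inj_on f A \<and> inj_on f B) \<or> f ` A \<inter> f ` B \<noteq> {}"
      by (auto simp: inj_on_Un)
    then show ?thesis
      using False by (auto simp: join_basis_eq push_basis_def)
  qed
  then show ?thesis
    unfolding push_def lin_ext_join_basis[OF A B] join_push2_basis[OF f A B] .
qed

lemma push_join:
  assumes f: "aug_simplicial_map d e f"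
  shows "push d f (join d y) = join e (push2 d f (y :: 'k::comm_ring_1 chain2))"
proof -
  have "push d f (join d y) = lin_ext (simplices2 d) (\<lambda>p. push d f (join_basis p)) y"
    unfolding join_def[of d] push_def lin_ext_comp ..
  also have "\<dots> = lin_ext (simplices2 d) (\<lambda>p. join e (\<lambda>q. push_basis f (fst p) (fst q) * push_basis f (snd p) (snd q))) y"
  proof (rule lin_ext_cong)
    fix p assume "p \<in> simplices2 d"
    then obtain A B where "p = (A, B)" "A \<in> simplices d" "B \<in> simplices d"
      by (cases p) auto
    then show "push d f (join_basis p :: 'k chain)
        = join e (\<lambda>q. push_basis f (fst p) (fst q) * push_basis f (snd p) (snd q))"
      using push_join_basis[OF f] by auto
  qed
  also have "\<dots> = join e (push2 d f y)"
    unfolding push2_def join_def[of e] lin_ext_comp ..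
  finally show ?thesis .
qed

lemma strict_mono_on_image_cut:
  assumes "strict_mono_on S f" "v \<in> S"
  shows "lower (f ` S) (f v) = f ` lower S v" "upper (f ` S) (f v) = f ` upper S v"
    and "{y\<in>f ` S. y < f v} = f ` {x\<in>S. x < v}"
  using strict_mono_on_less_eq[OF assms(1) _ assms(2)] strict_mono_on_less_eq[OF assms(1) assms(2)]
    strict_mono_on_less[OF assms(1) _ assms(2)]
  by auto

lemma face_sign_image:
  assumes "strict_mono_on S f" "v \<in> S"
  shows "face_sign (f ` S) (f v) = face_sign S v"
proof -
  have "inj_on f {x\<in>S. x < v}"
    using strict_mono_on_imp_inj_on[OF assms(1)] by (rule inj_on_subset) auto
  then show ?thesis
    unfolding face_sign_def strict_mono_on_image_cut[OF assms] by (simp add: card_image)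
qed

lemma not_inj_on_split:
  fixes f :: "nat \<Rightarrow> 'b::order"
  assumes mono: "mono_on S f" and "\<not> inj_on f S" and v: "v \<in> S"
  shows "\<not> inj_on f (lower S v) \<or> \<not> inj_on f (upper S v)"
proof -
  obtain a b where ab: "a \<in> S" "b \<in> S" "a < b" "f a = f b"
  proof -
    obtain s s' where "s \<in> S" "s' \<in> S" "s \<noteq> s'" "f s = f s'"
      using assms(2) by (auto simp: inj_on_def)
    then show ?thesis
      using that by (cases s s' rule: linorder_cases) auto
  qed
  consider "b \<le> v" | "v \<le> a" | "a < v" "v < b"
    by linarith
  then show ?thesis
  proof cases
    case 1
    then have "\<not> inj_on f (lower S v)" using ab inj_onD[of f "lower S v" a b] by auto
    then show ?thesis ..
  next
    case 2
    then have "\<not> inj_on f (upper S v)" using ab inj_onD[of f "upper S v" a b] by auto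
    then show ?thesis ..
  next
    case 3
    have "f a \<le> f v" "f v \<le> f b"
      using monotone_onD[OF mono ab(1) v] monotone_onD[OF mono v ab(2)] 3 by simp_all
    then have "f v = f a" using ab(4) by (metis order.antisym)
    then have "\<not> inj_on f (lower S v)" using 3 ab v inj_onD[of f "lower S v" v a] by auto
    then show ?thesis ..
  qed
qed

lemma push2_coprod_basis:
  assumes S: "S \<in> simplices d"
  shows "push2 d f (coprod_basis S) q = (\<Sum>v\<in>S. face_sign S v
    * (push_basis f (lower S v) (fst q) * push_basis f (upper S v) (snd q) :: 'k::comm_ring_1))"
proof -
  have "(\<lambda>v. (lower S v, upper S v)) ` S \<subseteq> simplices2 d"
    using S by (auto intro: subset_in_simplices)
  then show ?thesis
    unfolding push2_def coprod_basis_eq[abs_def] by (simp add: lin_ext_combination)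
qed

lemma coprod_basis_image:
  assumes f: "strict_mono_on S f" and fin: "finite S"
  shows "coprod_basis (f ` S) q = (\<Sum>v\<in>S. face_sign S v
    * (push_basis f (lower S v) (fst q) * push_basis f (upper S v) (snd q) :: 'k::comm_ring_1))"
proof -
  have inj: "inj_on f S"
    using strict_mono_on_imp_inj_on[OF f] .
  have "coprod_basis (f ` S) q
      = (\<Sum>v\<in>S. if q = (lower (f ` S) (f v), upper (f ` S) (f v)) then face_sign (f ` S) (f v) else (0::'k))"
    unfolding coprod_basis_eq by (rule sum.reindex[OF inj, unfolded comp_def])
  also have "\<dots> = (\<Sum>v\<in>S. face_sign S v
    * (push_basis f (lower S v) (fst q) * push_basis f (upper S v) (snd q)))"
  proof (rule sum.cong[OF refl])
    fix v assume v: "v \<in> S"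
    have "inj_on f (lower S v)" "inj_on f (upper S v)"
      using inj by (auto intro: inj_on_subset)
    then show "(if q = (lower (f ` S) (f v), upper (f ` S) (f v)) then face_sign (f ` S) (f v) else 0)
      = face_sign S v * (push_basis f (lower S v) (fst q) * push_basis f (upper S v) (snd q) :: 'k)"
      unfolding strict_mono_on_image_cut[OF f v] face_sign_image[OF f v]
      by (auto simp: push_basis_def prod_eq_iff)
  qed
  finally show ?thesis .
qed

lemma push2_coprod_basis_eq_coprod_push_basis:
  assumes f: "aug_simplicial_map d e f" and S: "S \<in> simplices d"
  shows "push2 d f (coprod_basis S) = (coprod e (push_basis f S) :: 'k::comm_ring_1 chain2)"
proof
  fix q
  have coprod_push: "coprod e (push_basis f S) q = (if inj_on f S then coprod_basis (f ` S) q else (0::'k))"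
  proof -
    have "push_basis f S = (\<lambda>T. if T = f ` S then (if inj_on f S then 1 else 0) else (0::'k))"
      by (auto simp: push_basis_def)
    then show ?thesis
      unfolding coprod_def using aug_simplicial_map_image[OF f S] by (simp add: lin_ext_single)
  qed
  have mono: "mono_on S f"
    using aug_simplicial_map_mono_on[OF f S] .
  show "push2 d f (coprod_basis S) q = (coprod e (push_basis f S) q :: 'k)"
  proof (cases "inj_on f S")
    case True
    then show ?thesis
      using coprod_basis_image[OF mono_imp_strict_mono[OF mono True] simplices_finite[OF S], where 'k = 'k]
      by (simp add: push2_coprod_basis[OF S] coprod_push)
  next
    case False
    then have "push2 d f (coprod_basis S) q = (0::'k)"
      unfolding push2_coprod_basis[OF S]
      using not_inj_on_split[OF mono False] by (intro sum.neutral) (auto simp: push_basis_def)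
    then show ?thesis using False by (simp add: coprod_push)
  qed
qed

lemma push2_coprod:
  assumes f: "aug_simplicial_map d e f"
  shows "push2 d f (coprod d x) = coprod e (push d f (x :: 'k::comm_ring_1 chain))"
proof -
  have "push2 d f (coprod d x) = lin_ext (simplices d) (\<lambda>S. push2 d f (coprod_basis S)) x"
    unfolding coprod_def[of d] push2_def lin_ext_comp ..
  also have "\<dots> = lin_ext (simplices d) (\<lambda>S. coprod e (push_basis f S)) x"
    using push2_coprod_basis_eq_coprod_push_basis[OF f] by (rule lin_ext_cong)
  also have "\<dots> = coprod e (push d f x)"
    unfolding push_def coprod_def[of e] lin_ext_comp ..
  finally show ?thesis .
qed

theorem theoremB2:
  fixes d :: nat
  shows "(\<forall>c :: unit \<Rightarrow> 'k::comm_ring_1. \<forall>T. eps_map c T \<noteq> 0 \<longrightarrow> card T = 0)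
   \<and> (\<forall>p\<in>simplices2 d. \<forall>T. (join_basis p T :: 'k) \<noteq> 0 \<longrightarrow> card T = card (fst p) + card (snd p))
   \<and> (\<forall>S\<in>simplices d. \<forall>q. (coprod_basis S q :: 'k) \<noteq> 0 \<longrightarrow> card (fst q) + card (snd q) = card S + 1)
   \<and> (\<forall>c :: unit \<Rightarrow> 'k. hom_diff (bd d) (\<lambda>c. \<lambda>_. 0) 0 eps_map c = (\<lambda>_. 0))
   \<and> (\<forall>y \<in> (chains2 d :: 'k chain2 set). hom_diff (bd d) (bd2 d) 0 (join d) y = (\<lambda>_. 0))
   \<and> (\<forall>x \<in> (chains d :: 'k chain set).
        hom_diff (bd2 d) (bd d) 1 (coprod d) x = (\<lambda>q. eps_tensor_id x q - id_tensor_eps x q))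
   \<and> (\<forall>c :: unit \<Rightarrow> 'k. coprod d (eps_map c) = (\<lambda>_. 0))
   \<and> (\<forall>x \<in> (chains d :: 'k chain set). join d (eps_tensor_id x) = x)
   \<and> (\<forall>x \<in> (chains d :: 'k chain set). join d (id_tensor_eps x) = x)
   \<and> (\<forall>e f. aug_simplicial_map d e f \<longrightarrow>
        (\<forall>c :: unit \<Rightarrow> 'k. push d f (eps_map c) = eps_map c)
      \<and> (\<forall>y \<in> (chains2 d :: 'k chain2 set). push d f (join d y) = join e (push2 d f y))
      \<and> (\<forall>x \<in> (chains d :: 'k chain set). push2 d f (coprod d x) = coprod e (push d f x)))"
proof (intro conjI allI ballI impI)
  show "eps_map c T \<noteq> 0 \<Longrightarrow> card T = 0" for c :: "unit \<Rightarrow> 'k" and T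
    by (rule eps_map_degree)
  show "(join_basis p T :: 'k) \<noteq> 0 \<Longrightarrow> card T = card (fst p) + card (snd p)"
    if "p \<in> simplices2 d" for p T
    using that by (rule join_basis_degree)
  show "(coprod_basis S q :: 'k) \<noteq> 0 \<Longrightarrow> card (fst q) + card (snd q) = card S + 1"
    if "S \<in> simplices d" for S q
    using that by (rule coprod_basis_degree)
  show "hom_diff (bd2 d) (bd d) 1 (coprod d) x = (\<lambda>q. eps_tensor_id x q - id_tensor_eps x q)"
    if "x \<in> (chains d :: 'k chain set)" for x
    using that by (rule coprod_homotopy)
qed (simp_all add: hom_diff_eps_map join_chain_map coprod_eps_map
  join_eps_tensor_id join_id_tensor_eps push_eps_map push_join push2_coprod)

end
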